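(* Let $X$ be a $T_1$ space and $\mathcal{P}$ an ideal of closed subsets of $X$ containing every singleton subset of $X$. Then: (1) a nonzero ideal $I$ of $C(X)_\mathcal{P}$ is minimal if and only if there exists $\alpha\in X$ with $I=\langle\chi_{\{\alpha\}}\rangle$, if and only if $|Z_\mathcal{P}[I]|=2$; (2) the socle of $C(X)_\mathcal{P}$ consists exactly of the functions in $C(X)_\mathcal{P}$ that vanish everywhere except on a finite set; (3) the socle of $C(X)_\mathcal{P}$ is an essential ideal and is free.
   Context: An ideal of closed subsets of $X$ is a family $\mathcal{P}$ of closed subsets closed under finite unions and under passing to closed subsets. $D_f$ is the set of discontinuity points of $f\in\mathbb{R}^X$; $C(X)_\mathcal{P}=\{f\in\mathbb{R}^X\colon\overline{D_f}\in\mathcal{P}\}$, a commutative ring with pointwise operations. $\chi_A$ denotes the characteristic function of $A$. For $f\in C(X)_\mathcal{P}$, $Z_\mathcal{P}(f)=\{x\colon f(x)=0\}$ and $Z_\mathcal{P}[I]=\{Z_\mathcal{P}(f)\colon f\in I\}$. The socle is the sum of all minimal ideals. An ideal is essential if it meets every nonzero ideal nontrivially; an ideal $I$ is free if $\bigcap Z_\mathcal{P}[I]=\emptyset$. *)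

theory Defs
  imports "HOL-Analysis.Analysis"
begin

text \<open>The space X is the whole (type-class) T1 space UNIV :: 'a set.\<close>

definition closed_ideal :: "'a::topological_space set set \<Rightarrow> bool" where
  "closed_ideal P \<longleftrightarrow> (\<forall>A\<in>P. closed A)
     \<and> {} \<in> P
     \<and> (\<forall>A\<in>P. \<forall>B\<in>P. A \<union> B \<in> P)
     \<and> (\<forall>A\<in>P. \<forall>B. closed B \<and> B \<subseteq> A \<longrightarrow> B \<in> P)"

definition discont :: "('a::topological_space \<Rightarrow> real) \<Rightarrow> 'a set" where
  "discont f = {x. \<not> (f \<longlongrightarrow> f x) (at x)}"

definition CP :: "'a::topological_space set set \<Rightarrow> ('a \<Rightarrow> real) set" where
  "CP P = {f. closure (discont f) \<in> P}"

definition is_ideal :: "'a::topological_space set set \<Rightarrow> ('a \<Rightarrow> real) set \<Rightarrow> bool" where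
  "is_ideal P I \<longleftrightarrow> I \<subseteq> CP P \<and> (\<lambda>x. 0) \<in> I
     \<and> (\<forall>f\<in>I. \<forall>g\<in>I. (\<lambda>x. f x + g x) \<in> I)
     \<and> (\<forall>f\<in>I. (\<lambda>x. - f x) \<in> I)
     \<and> (\<forall>r\<in>CP P. \<forall>f\<in>I. (\<lambda>x. r x * f x) \<in> I)"

definition minimal_ideal :: "'a::topological_space set set \<Rightarrow> ('a \<Rightarrow> real) set \<Rightarrow> bool" where
  "minimal_ideal P I \<longleftrightarrow> is_ideal P I \<and> I \<noteq> {\<lambda>x. 0}
     \<and> (\<forall>J. is_ideal P J \<and> J \<subseteq> I \<longrightarrow> J = {\<lambda>x. 0} \<or> J = I)"

definition gen_ideal :: "'a::topological_space set set \<Rightarrow> ('a \<Rightarrow> real) set \<Rightarrow> ('a \<Rightarrow> real) set" where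
  "gen_ideal P S = \<Inter>{J. is_ideal P J \<and> S \<subseteq> J}"

definition chi :: "'a set \<Rightarrow> 'a \<Rightarrow> real" where
  "chi A = (\<lambda>x. if x \<in> A then 1 else 0)"

definition ZP :: "('a \<Rightarrow> real) \<Rightarrow> 'a set" where
  "ZP f = {x. f x = 0}"

definition socle :: "'a::topological_space set set \<Rightarrow> ('a \<Rightarrow> real) set" where
  "socle P = gen_ideal P (\<Union>{I. minimal_ideal P I})"

definition essential_ideal :: "'a::topological_space set set \<Rightarrow> ('a \<Rightarrow> real) set \<Rightarrow> bool" where
  "essential_ideal P E \<longleftrightarrow> is_ideal P E \<and>
     (\<forall>J. is_ideal P J \<and> J \<noteq> {\<lambda>x. 0} \<longrightarrow> (\<exists>f\<in>E \<inter> J. f \<noteq> (\<lambda>x. 0)))"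

definition free_ideal :: "('a \<Rightarrow> real) set \<Rightarrow> bool" where
  "free_ideal I \<longleftrightarrow> \<Inter>(ZP ` I) = {}"

end

theory Submission
  imports Defs
begin

text \<open>
  A finitely supported function is continuous off its finite, hence closed, support, so it
  belongs to \<open>C(X)\<^sub>P\<close>. Multiplying by \<open>chi {a} / f a\<close> shows that an ideal containing
  some \<open>f\<close> with \<open>f a \<noteq> 0\<close> contains \<open>chi {a}\<close>, hence all functions supported in \<open>{a}\<close>; and an
  ideal containing \<open>chi {a}\<close> for every \<open>a\<close> contains all finitely supported functions, being
  sums of multiples of these. So the minimal ideals are the ideals \<open>\<langle>chi {a}\<rangle>\<close> of functions
  supported in one point (their zero sets are \<open>X\<close> and \<open>X - {a}\<close>), and the socle is the ideal
  of finitely supported functions, which meets every nonzero ideal in some \<open>chi {a}\<close>.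
\<close>

definition supported_in :: "'a set \<Rightarrow> ('a \<Rightarrow> real) set" where
  "supported_in S = {f. {x. f x \<noteq> 0} \<subseteq> S}"

lemma discont_subset_closure_support:
  "discont f \<subseteq> closure {x. f x \<noteq> 0}"
proof
  fix x assume x: "x \<in> discont f"
  define U where "U = - closure {x. f x \<noteq> 0}"
  have "open U"
    unfolding U_def by (rule open_Compl[OF closed_closure])
  have zero: "f y = 0" if "y \<in> U" for y
    using that closure_subset[of "{x. f x \<noteq> 0}"] unfolding U_def by blast
  show "x \<in> closure {x. f x \<noteq> 0}"
  proof (rule ccontr)
    assume "x \<notin> closure {x. f x \<noteq> 0}"
    then have "x \<in> U"
      unfolding U_def by blast
    then have "eventually (\<lambda>y. f y = f x) (at x)"
      unfolding eventually_at_topological using \<open>open U\<close> zero by (intro exI[of _ U]) simp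
    then have "(f \<longlongrightarrow> f x) (at x)"
      by (rule tendsto_eventually)
    then show False
      using x by (simp add: discont_def)
  qed
qed

lemma support_add_subset: "{x. f x + g x \<noteq> 0} \<subseteq> {x. f x \<noteq> 0} \<union> {x. g x \<noteq> (0::real)}"
  by auto

lemma support_mult_subset: "{x. r x * f x \<noteq> 0} \<subseteq> {x. f x \<noteq> (0::real)}"
  by auto

lemma is_ideal_zero: "is_ideal P J \<Longrightarrow> (\<lambda>x. 0) \<in> J"
  by (simp add: is_ideal_def)

lemma is_ideal_mult: "is_ideal P J \<Longrightarrow> r \<in> CP P \<Longrightarrow> f \<in> J \<Longrightarrow> (\<lambda>x. r x * f x) \<in> J"
  by (simp add: is_ideal_def)

lemma is_ideal_sum:
  assumes "is_ideal P J" "finite S" "\<And>i. i \<in> S \<Longrightarrow> F i \<in> J"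
  shows "(\<lambda>x. \<Sum>i\<in>S. F i x) \<in> J"
  using assms(2,3)
proof (induction S rule: finite_induct)
  case empty
  then show ?case using assms(1) by (simp add: is_ideal_def)
next
  case (insert i S)
  then show ?case using assms(1) by (simp add: is_ideal_def)
qed

lemma nonzero_ideal_obtains_nonvanishing:
  assumes "is_ideal P I" "I \<noteq> {\<lambda>x. 0}"
  obtains f a where "f \<in> I" "f a \<noteq> 0"
  using assms by (auto simp: is_ideal_def fun_eq_iff)

lemma chi_singleton_nonzero: "chi {a} \<noteq> (\<lambda>x. 0)"
  by (auto simp: chi_def fun_eq_iff)

lemma ZP_chi_singleton: "ZP (chi {a}) = - {a}"
  by (auto simp: ZP_def chi_def)

lemma chi_singleton_finite_support: "chi {a} \<in> {f. finite {x. f x \<noteq> 0}}"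
  by (simp add: chi_def)

lemma ZP_zero: "ZP (\<lambda>x. 0) = UNIV"
  by (simp add: ZP_def)

lemma card_UNIV_Compl_singleton: "card {UNIV, - {a}} = 2"
proof -
  have "UNIV \<noteq> - {a}" by auto
  then show ?thesis by simp
qed

lemma ZP_image_supset:
  assumes "is_ideal P I" "chi {a} \<in> I"
  shows "{UNIV, - {a}} \<subseteq> ZP ` I"
proof -
  have "{ZP (\<lambda>x. 0), ZP (chi {a})} \<subseteq> ZP ` I"
    using assms is_ideal_zero by blast
  then show ?thesis
    by (simp only: ZP_zero ZP_chi_singleton)
qed

lemma chi_singleton_supported_in: "chi {a} \<in> supported_in {a}"
  by (simp add: supported_in_def chi_def subset_iff)

locale singleton_closed_ideal =
  fixes P :: "'a::t1_space set set"
  assumes closed_ideal: "closed_ideal P"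
    and singleton_mem: "{x} \<in> P"
begin

lemma finite_mem: "finite T \<Longrightarrow> T \<in> P"
proof (induction T rule: finite_induct)
  case empty
  then show ?case using closed_ideal by (simp add: closed_ideal_def)
next
  case (insert x T)
  then have "{x} \<union> T \<in> P"
    using closed_ideal singleton_mem[of x] unfolding closed_ideal_def by blast
  then show ?case by simp
qed

lemma closed_subset_mem: "A \<in> P \<Longrightarrow> closed B \<Longrightarrow> B \<subseteq> A \<Longrightarrow> B \<in> P"
  using closed_ideal unfolding closed_ideal_def by blast

lemma finite_support_CP:
  assumes "finite {x. f x \<noteq> 0}"
  shows "f \<in> CP P"
proof -
  have "closed {x. f x \<noteq> 0}"
    using assms by (rule finite_imp_closed)
  then have "closure {x. f x \<noteq> 0} = {x. f x \<noteq> 0}"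
    by (rule closure_closed)
  then have "discont f \<subseteq> {x. f x \<noteq> 0}"
    using discont_subset_closure_support[of f] by (simp only:)
  then have "closure (discont f) \<subseteq> {x. f x \<noteq> 0}"
    using \<open>closed {x. f x \<noteq> 0}\<close> by (rule closure_minimal)
  then show ?thesis
    unfolding CP_def using closed_subset_mem[OF finite_mem[OF assms]] by blast
qed

lemma supported_in_CP: "finite S \<Longrightarrow> supported_in S \<subseteq> CP P"
  by (auto simp: supported_in_def intro: finite_support_CP finite_subset)

lemma chi_singleton_mem_ideal:
  assumes J: "is_ideal P J" and "f \<in> J" "f a \<noteq> 0"
  shows "chi {a} \<in> J"
proof -
  have "(\<lambda>x. chi {a} x / f a) \<in> supported_in {a}"
    by (simp add: supported_in_def chi_def subset_iff)
  then have "(\<lambda>x. chi {a} x / f a) \<in> CP P"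
    using supported_in_CP[of "{a}"] by blast
  then have "(\<lambda>x. chi {a} x / f a * f x) \<in> J"
    by (rule is_ideal_mult[OF J _ \<open>f \<in> J\<close>])
  moreover have "(\<lambda>x. chi {a} x / f a * f x) = chi {a}"
    using \<open>f a \<noteq> 0\<close> by (simp add: chi_def fun_eq_iff)
  ultimately show ?thesis by simp
qed

lemma supported_in_subset_ideal:
  assumes J: "is_ideal P J" and "finite S" and chis: "\<And>a. a \<in> S \<Longrightarrow> chi {a} \<in> J"
  shows "supported_in S \<subseteq> J"
proof
  fix f assume f: "f \<in> supported_in S"
  then have "f \<in> CP P"
    using supported_in_CP[OF \<open>finite S\<close>] by blast
  have "(\<lambda>x. \<Sum>a\<in>S. f x * chi {a} x) \<in> J"
  proof (rule is_ideal_sum[OF J \<open>finite S\<close>])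
    fix a assume "a \<in> S"
    show "(\<lambda>x. f x * chi {a} x) \<in> J"
      using J \<open>f \<in> CP P\<close> chis[OF \<open>a \<in> S\<close>] by (rule is_ideal_mult)
  qed
  moreover have "(\<lambda>x. \<Sum>a\<in>S. f x * chi {a} x) = f"
    using f \<open>finite S\<close> by (auto simp: supported_in_def chi_def fun_eq_iff sum_distrib_left[symmetric])
  ultimately show "f \<in> J" by simp
qed

lemma is_ideal_supported_in:
  assumes "finite S"
  shows "is_ideal P (supported_in S)"
  unfolding is_ideal_def
proof (intro conjI ballI)
  show "supported_in S \<subseteq> CP P"
    using assms by (rule supported_in_CP)
  fix f assume f: "f \<in> supported_in S"
  show "(\<lambda>x. - f x) \<in> supported_in S"
    using f by (simp add: supported_in_def)
  show "(\<lambda>x. r x * f x) \<in> supported_in S" for r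
    using f support_mult_subset[of r f] unfolding supported_in_def mem_Collect_eq by blast
  show "(\<lambda>x. f x + g x) \<in> supported_in S" if "g \<in> supported_in S" for g
    using f that support_add_subset[of f g] unfolding supported_in_def mem_Collect_eq by blast
qed (simp add: supported_in_def)

lemma is_ideal_finite_support: "is_ideal P {f. finite {x. f x \<noteq> 0}}"
  unfolding is_ideal_def
proof (intro conjI ballI subsetI)
  fix f :: "'a \<Rightarrow> real" assume f: "f \<in> {f. finite {x. f x \<noteq> 0}}"
  then show "f \<in> CP P"
    by (simp add: finite_support_CP)
  show "(\<lambda>x. - f x) \<in> {f. finite {x. f x \<noteq> 0}}"
    using f by simp
  show "(\<lambda>x. r x * f x) \<in> {f. finite {x. f x \<noteq> 0}}" for r
    using f finite_subset[OF support_mult_subset[of r f]] by (simp only: mem_Collect_eq)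
  show "(\<lambda>x. f x + g x) \<in> {f. finite {x. f x \<noteq> 0}}" if "g \<in> {f. finite {x. f x \<noteq> 0}}" for g
    using f that finite_subset[OF support_add_subset[of f g]] by (simp only: mem_Collect_eq finite_Un)
qed simp

lemma supported_in_singleton_subset_ideal:
  assumes "is_ideal P J" "f \<in> J" "f a \<noteq> 0"
  shows "supported_in {a} \<subseteq> J"
  by (rule supported_in_subset_ideal) (use assms chi_singleton_mem_ideal in auto)

lemma gen_ideal_chi_singleton: "gen_ideal P {chi {a}} = supported_in {a}"
  unfolding gen_ideal_def
proof (rule antisym)
  show "\<Inter> {J. is_ideal P J \<and> {chi {a}} \<subseteq> J} \<subseteq> supported_in {a}"
    by (rule Inter_lower) (simp add: is_ideal_supported_in chi_singleton_supported_in)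
  show "supported_in {a} \<subseteq> \<Inter> {J. is_ideal P J \<and> {chi {a}} \<subseteq> J}"
    by (rule Inter_greatest) (simp add: supported_in_singleton_subset_ideal[of _ "chi {a}" a] chi_def)
qed

lemma supported_in_singleton_nonzero: "supported_in {a} \<noteq> {\<lambda>x. 0}"
  using chi_singleton_nonzero[of a] chi_singleton_supported_in[of a] by blast

lemma minimal_ideal_supported_in: "minimal_ideal P (supported_in {a})"
  unfolding minimal_ideal_def
proof (intro conjI allI impI)
  show "is_ideal P (supported_in {a})" "supported_in {a} \<noteq> {\<lambda>x. 0}"
    by (simp_all add: is_ideal_supported_in supported_in_singleton_nonzero)
  fix J assume J: "is_ideal P J \<and> J \<subseteq> supported_in {a}"
  show "J = {\<lambda>x. 0} \<or> J = supported_in {a}"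
  proof (rule disjCI)
    assume "J \<noteq> supported_in {a}"
    show "J = {\<lambda>x. 0}"
    proof (rule ccontr)
      assume "J \<noteq> {\<lambda>x. 0}"
      then obtain f b where f: "f \<in> J" "f b \<noteq> 0"
        using J nonzero_ideal_obtains_nonvanishing by blast
      have "f \<in> supported_in {a}"
        using J f(1) by blast
      then have "b = a"
        using f(2) by (auto simp: supported_in_def)
      then have "supported_in {a} \<subseteq> J"
        using J f supported_in_singleton_subset_ideal by blast
      then show False
        using J \<open>J \<noteq> supported_in {a}\<close> by blast
    qed
  qed
qed

lemma minimal_ideal_iff_supported_in:
  assumes I: "is_ideal P I" "I \<noteq> {\<lambda>x. 0}"
  shows "minimal_ideal P I \<longleftrightarrow> (\<exists>a. I = supported_in {a})"
proof
  assume min: "minimal_ideal P I"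
  obtain f a where "f \<in> I" "f a \<noteq> 0"
    using I nonzero_ideal_obtains_nonvanishing by blast
  then have "supported_in {a} \<subseteq> I"
    using I supported_in_singleton_subset_ideal by blast
  moreover have "is_ideal P (supported_in {a})"
    by (simp add: is_ideal_supported_in)
  ultimately have "supported_in {a} = I"
    using min supported_in_singleton_nonzero[of a] unfolding minimal_ideal_def by blast
  then show "\<exists>a. I = supported_in {a}" by blast
qed (auto simp: minimal_ideal_supported_in)

lemma card_ZP_eq_2_iff_supported_in:
  assumes I: "is_ideal P I" "I \<noteq> {\<lambda>x. 0}"
  shows "card (ZP ` I) = 2 \<longleftrightarrow> (\<exists>a. I = supported_in {a})"
proof
  assume card: "card (ZP ` I) = 2"
  obtain f a where "f \<in> I" "f a \<noteq> 0"
    using I nonzero_ideal_obtains_nonvanishing by blast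
  then have "chi {a} \<in> I"
    using I chi_singleton_mem_ideal by blast
  with I(1) have "{UNIV, - {a}} \<subseteq> ZP ` I"
    by (rule ZP_image_supset)
  moreover have "finite (ZP ` I)"
    using card by (simp add: card_ge_0_finite)
  ultimately have ZPs: "ZP ` I = {UNIV, - {a}}"
    using card card_UNIV_Compl_singleton[of a] by (metis card_subset_eq)
  have "I \<subseteq> supported_in {a}"
  proof
    fix g assume "g \<in> I"
    then have "- {a} \<subseteq> ZP g"
      using ZPs by blast
    then show "g \<in> supported_in {a}"
      by (auto simp: ZP_def supported_in_def)
  qed
  moreover have "supported_in {a} \<subseteq> I"
    using I(1) \<open>chi {a} \<in> I\<close> by (rule supported_in_singleton_subset_ideal) (simp add: chi_def)
  ultimately show "\<exists>a. I = supported_in {a}"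
    by blast
next
  assume "\<exists>a. I = supported_in {a}"
  then obtain a where a: "I = supported_in {a}" by blast
  have "ZP ` supported_in {a} \<subseteq> {UNIV, - {a}}"
    by (auto simp: ZP_def supported_in_def)
  moreover have "{UNIV, - {a}} \<subseteq> ZP ` supported_in {a}"
    using is_ideal_supported_in[of "{a}"] chi_singleton_supported_in[of a]
    by (intro ZP_image_supset) simp_all
  ultimately show "card (ZP ` I) = 2"
    using a card_UNIV_Compl_singleton[of a] by (simp add: subset_antisym)
qed

lemma minimal_ideal_finite_support:
  assumes "minimal_ideal P I" "f \<in> I"
  shows "finite {x. f x \<noteq> 0}"
proof -
  have "is_ideal P I" "I \<noteq> {\<lambda>x. 0}"
    using assms(1) unfolding minimal_ideal_def by blast+
  then obtain a where "I = supported_in {a}"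
    using assms(1) minimal_ideal_iff_supported_in by blast
  then have "{x. f x \<noteq> 0} \<subseteq> {a}"
    using assms(2) by (simp add: supported_in_def)
  then show ?thesis
    by (rule finite_subset) simp
qed

lemma socle_eq_finite_support: "socle P = {f. finite {x. f x \<noteq> 0}}"
  unfolding socle_def gen_ideal_def
proof (rule antisym)
  have "\<Union> {I. minimal_ideal P I} \<subseteq> {f. finite {x. f x \<noteq> 0}}"
    using minimal_ideal_finite_support by blast
  then show "\<Inter> {J. is_ideal P J \<and> \<Union> {I. minimal_ideal P I} \<subseteq> J} \<subseteq> {f. finite {x. f x \<noteq> 0}}"
    by (intro Inter_lower) (simp add: is_ideal_finite_support)
  show "{f. finite {x. f x \<noteq> 0}} \<subseteq> \<Inter> {J. is_ideal P J \<and> \<Union> {I. minimal_ideal P I} \<subseteq> J}"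
  proof (rule Inter_greatest)
    fix J assume "J \<in> {J. is_ideal P J \<and> \<Union> {I. minimal_ideal P I} \<subseteq> J}"
    then have J: "is_ideal P J" and minimals: "\<Union> {I. minimal_ideal P I} \<subseteq> J"
      by blast+
    have chis: "chi {a} \<in> J" for a
      using minimals minimal_ideal_supported_in[of a] chi_singleton_supported_in[of a] by blast
    show "{f. finite {x. f x \<noteq> 0}} \<subseteq> J"
    proof
      fix f :: "'a \<Rightarrow> real" assume "f \<in> {f. finite {x. f x \<noteq> 0}}"
      then have "finite {x. f x \<noteq> 0}" "f \<in> supported_in {x. f x \<noteq> 0}"
        by (simp_all add: supported_in_def)
      then show "f \<in> J"
        using supported_in_subset_ideal[OF J _ chis] by blast
    qed
  qed
qed

lemma essential_ideal_finite_support: "essential_ideal P {f. finite {x. f x \<noteq> 0}}"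
  unfolding essential_ideal_def
proof (intro conjI allI impI is_ideal_finite_support)
  fix J assume "is_ideal P J \<and> J \<noteq> {\<lambda>x. 0}"
  then have J: "is_ideal P J" "J \<noteq> {\<lambda>x. 0}"
    by simp_all
  then obtain f a where "f \<in> J" "f a \<noteq> 0"
    by (rule nonzero_ideal_obtains_nonvanishing)
  with J(1) have "chi {a} \<in> J"
    by (rule chi_singleton_mem_ideal)
  with chi_singleton_finite_support have "chi {a} \<in> {f. finite {x. f x \<noteq> 0}} \<inter> J"
    by (rule IntI)
  then show "\<exists>f\<in>{f. finite {x. f x \<noteq> 0}} \<inter> J. f \<noteq> (\<lambda>x. 0)"
    by (rule bexI[where P = "\<lambda>f. f \<noteq> (\<lambda>x. 0)", OF chi_singleton_nonzero])
qed

end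

lemma free_ideal_finite_support: "free_ideal {f. finite {x. f x \<noteq> 0}}"
  unfolding free_ideal_def
proof (rule equals0I)
  fix x assume "x \<in> \<Inter> (ZP ` {f. finite {x. f x \<noteq> 0}})"
  then have "x \<in> ZP (chi {x})"
    by (rule INT_D[OF _ chi_singleton_finite_support])
  then show False
    by (simp add: ZP_chi_singleton)
qed

theorem theorem5p8:
  fixes P :: "'a::t1_space set set"
  assumes "closed_ideal P"
    and "\<forall>x. {x} \<in> P"
  shows "(\<forall>I. is_ideal P I \<and> I \<noteq> {\<lambda>x. 0} \<longrightarrow>
            (minimal_ideal P I \<longleftrightarrow> (\<exists>a. I = gen_ideal P {chi {a}}))
          \<and> ((\<exists>a. I = gen_ideal P {chi {a}}) \<longleftrightarrow> card (ZP ` I) = 2))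
       \<and> socle P = {f \<in> CP P. finite {x. f x \<noteq> 0}}
       \<and> essential_ideal P (socle P)
       \<and> free_ideal (socle P)"
proof -
  interpret singleton_closed_ideal P
    using assms by unfold_locales auto
  have "{f \<in> CP P. finite {x. f x \<noteq> 0}} = {f. finite {x. f x \<noteq> 0}}"
    using finite_support_CP by blast
  then show ?thesis
    using minimal_ideal_iff_supported_in card_ZP_eq_2_iff_supported_in
      gen_ideal_chi_singleton socle_eq_finite_support essential_ideal_finite_support
      free_ideal_finite_support
    by simp
qed

end
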